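(* Under the saturation assumption below, suppose that $\hat{\mathcal I}$ is not a subset of any $\mathcal I\in\mathbb I^*$. Then $C_2=\sum_{\mathcal I\in\mathbb I^*}T_{\mathcal I}-\sum_{\mathcal I\in\overline{\mathbb I}^*}\overline T_{\mathcal I}$ (as a function of $\delta\in(0,\bar\delta]$) can be written as $P(\delta)/D(\delta)$, where $P$ and $D$ are polynomials in $\delta$, $D$ is a finite product of factors of the form $|\alpha_{\mathcal E(\mathcal I)}|-|\alpha_{\mathcal I}|$ ($\mathcal I\in\mathbb I$) or $|\alpha_{\overline{\mathcal E}(\mathcal I)}|-|\alpha_{\mathcal I}|$ ($\mathcal I\in\overline{\mathbb I}$), and $P(0)>0$.
   Context: A matching model: finite connected simple graph $\mathcal G=(\mathcal V,\xi)$, $\mathcal V=\{1,\dots,n\}$, arrival distribution $\alpha$ on $\mathcal V$; FCFS policy (an arriving item of class $i$ is matched with the oldest present item whose class is a neighbour of $i$, otherwise it waits). $\mathcal E(i)$ is the neighbour set of $i$ in $\mathcal G$, $\mathcal E(V)=\bigcup_{i\in V}\mathcal E(i)$, $|\alpha_V|=\sum_{i\in V}\alpha_i$. An independent set is a non-empty set of pairwise non-adjacent nodes; $\mathbb I$ is the set of independent sets of $\mathcal G$. Fix distinct non-adjacent nodes $i^*,j^*$; $\overline{\mathcal G}$ is $\mathcal G$ with edge $\{i^*,j^*\}$ added, with neighbourhood map $\overline{\mathcal E}$ and set of independent sets $\overline{\mathbb I}$. $\mathbb I^*=\{\mathcal I\in\mathbb I: i^*\in\mathcal I\text{ or }j^*\in\mathcal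 I\}$, $\mathbb I^{-*}=\mathbb I\setminus\mathbb I^*$, $\overline{\mathbb I}^*=\{\mathcal I\in\overline{\mathbb I}: i^*\in\mathcal I\text{ or }j^*\in\mathcal I\}$. For $\mathcal I\in\mathbb I$ and an ordering $(i_1,\dots,i_m)$ of $\mathcal I$, with $\mathcal I_k=\{i_1,\dots,i_k\}$, set $T_{(i_1,\dots,i_m)}=\prod_{k=1}^m\frac{\alpha_{i_k}}{|\alpha_{\mathcal E(\mathcal I_k)}|-|\alpha_{\mathcal I_k}|}$; $T_{\mathcal I}$ is the sum over all orderings of $\mathcal I$. $\overline T_{\mathcal I}$ ($\mathcal I\in\overline{\mathbb I}$) is defined identically with $\mathcal E$ replaced by $\overline{\mathcal E}$. Saturation assumption: $\alpha_i=a_i+b_i\delta$ with constants $a_i>0$, $b_i\in\mathbb R$, such that for all $\delta\in(0,\bar\delta]$ (some $\bar\delta>0$) $\alpha$ is a probability distribution satisfying the stability condition $|\alpha_{\mathcal I}|<|\alpha_{\mathcal E(\mathcal I)}|$ for all $\mathcal I\in\mathbb I$; moreover $\sum_{i\in\mathcal E(\hat{\mathcal I})}a_i-\sum_{i\in\hat{\mathcal I}}a_i=0$ for exactly one independent set $\hat{\mathcal I}\in\mathbb I$ (called saturated). *)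

theory Defs
  imports "HOL-Combinatorics.Multiset_Permutations" "HOL-Computational_Algebra.Polynomial"
begin

definition simple_graph :: "nat set \<Rightarrow> (nat \<Rightarrow> nat \<Rightarrow> bool) \<Rightarrow> bool" where
  "simple_graph V E \<longleftrightarrow> finite V \<and> (\<forall>x y. E x y \<longrightarrow> x \<in> V \<and> y \<in> V)
     \<and> (\<forall>x y. E x y \<longrightarrow> E y x) \<and> (\<forall>x. \<not> E x x)"

definition graph_connected :: "nat set \<Rightarrow> (nat \<Rightarrow> nat \<Rightarrow> bool) \<Rightarrow> bool" where
  "graph_connected V E \<longleftrightarrow> (\<forall>x\<in>V. \<forall>y\<in>V. (\<lambda>u v. E u v \<and> u \<in> V \<and> v \<in> V)\<^sup>*\<^sup>* x y)"

definition add_edge :: "(nat \<Rightarrow> nat \<Rightarrow> bool) \<Rightarrow> nat \<Rightarrow> nat \<Rightarrow> (nat \<Rightarrow> nat \<Rightarrow> bool)" where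
  "add_edge E i j = (\<lambda>x y. E x y \<or> (x = i \<and> y = j) \<or> (x = j \<and> y = i))"

definition nbr :: "nat set \<Rightarrow> (nat \<Rightarrow> nat \<Rightarrow> bool) \<Rightarrow> nat \<Rightarrow> nat set" where
  "nbr V E i = {j \<in> V. E i j}"

definition nbrs :: "nat set \<Rightarrow> (nat \<Rightarrow> nat \<Rightarrow> bool) \<Rightarrow> nat set \<Rightarrow> nat set" where
  "nbrs V E S = (\<Union>i\<in>S. nbr V E i)"

definition indep_sets :: "nat set \<Rightarrow> (nat \<Rightarrow> nat \<Rightarrow> bool) \<Rightarrow> nat set set" where
  "indep_sets V E = {I. I \<noteq> {} \<and> I \<subseteq> V \<and> (\<forall>x\<in>I. \<forall>y\<in>I. \<not> E x y)}"

definition T_ord :: "nat set \<Rightarrow> (nat \<Rightarrow> nat \<Rightarrow> bool) \<Rightarrow> (nat \<Rightarrow> real) \<Rightarrow> nat list \<Rightarrow> real" where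
  "T_ord V E alpha xs = (\<Prod>k\<in>{1..length xs}.
      alpha (xs ! (k - 1)) /
      ((\<Sum>i\<in>nbrs V E (set (take k xs)). alpha i) - (\<Sum>i\<in>set (take k xs). alpha i)))"

definition T_set :: "nat set \<Rightarrow> (nat \<Rightarrow> nat \<Rightarrow> bool) \<Rightarrow> (nat \<Rightarrow> real) \<Rightarrow> nat set \<Rightarrow> real" where
  "T_set V E alpha I = (\<Sum>xs\<in>permutations_of_set I. T_ord V E alpha xs)"

text \<open>The factor |alpha_{E(I)}| - |alpha_I| with alpha_i = a_i + b_i delta, as a polynomial in delta.\<close>
definition gap_poly :: "nat set \<Rightarrow> (nat \<Rightarrow> nat \<Rightarrow> bool) \<Rightarrow> (nat \<Rightarrow> real) \<Rightarrow> (nat \<Rightarrow> real) \<Rightarrow> nat set \<Rightarrow> real poly" where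
  "gap_poly V E a b I = [: (\<Sum>i\<in>nbrs V E I. a i) - (\<Sum>i\<in>I. a i),
                          (\<Sum>i\<in>nbrs V E I. b i) - (\<Sum>i\<in>I. b i) :]"

end

theory Submission
  imports Defs
begin

text \<open>Every set that occurs as a prefix of an ordering of some I in I* is a non-empty subset of I,
  hence an independent set other than the saturated one. Its factor |alpha_E(S)| - |alpha_S| is
  therefore positive on (0, dbar] by stability and non-zero at delta = 0 by uniqueness of the
  saturated set, so by continuity it is positive on the closed interval [0, dbar]; adding the edge
  only enlarges it. Consequently every T-term, and after bringing everything to a common denominator
  also C_2, is a quotient P/D with D a product of such factors, positive on [0, dbar]. At delta = 0
  the added edge can only shrink the terms of the independent sets that survive in the new graph,
  while the term of {i*, j*} disappears altogether; hence C_2(0) > 0 and, as D(0) > 0, also P(0) > 0.\<close>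

text \<open>The pair (P, fs) represents the quotient P / prod (map q fs). Requiring the denominator to be
  positive, rather than just non-zero, lets the sign of P be read off from that of f.\<close>

definition poly_fraction_over ::
  "('f \<Rightarrow> bool) \<Rightarrow> ('f \<Rightarrow> 'a::linordered_field poly) \<Rightarrow> 'a set \<Rightarrow> ('a \<Rightarrow> 'a) \<Rightarrow> bool" where
  "poly_fraction_over ok q X f \<longleftrightarrow> (\<exists>P fs. (\<forall>x\<in>set fs. ok x) \<and>
     (\<forall>d\<in>X. poly (prod_list (map q fs)) d > 0 \<and> f d = poly P d / poly (prod_list (map q fs)) d))"

lemma poly_fraction_overI:
  assumes "\<forall>x\<in>set fs. ok x" "\<forall>d\<in>X. poly (prod_list (map q fs)) d > 0"
    and "\<forall>d\<in>X. f d = poly P d / poly (prod_list (map q fs)) d"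
  shows "poly_fraction_over ok q X f"
  using assms unfolding poly_fraction_over_def by blast

lemma poly_fraction_overE:
  assumes "poly_fraction_over ok q X f"
  obtains P fs where "\<forall>x\<in>set fs. ok x" "\<forall>d\<in>X. poly (prod_list (map q fs)) d > 0"
    and "\<forall>d\<in>X. f d = poly P d / poly (prod_list (map q fs)) d"
  using assms unfolding poly_fraction_over_def by blast

lemma poly_fraction_over_cong:
  assumes "poly_fraction_over ok q X f" "\<And>d. d \<in> X \<Longrightarrow> f d = g d"
  shows "poly_fraction_over ok q X g"
  using assms unfolding poly_fraction_over_def by metis

lemma poly_fraction_over_poly: "poly_fraction_over ok q X (poly P)"
  by (rule poly_fraction_overI[of "[]"]) auto

lemma poly_fraction_over_factor:
  assumes "ok x" "\<forall>d\<in>X. poly (q x) d > 0"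
  shows "poly_fraction_over ok q X (\<lambda>d. poly p d / poly (q x) d)"
  by (rule poly_fraction_overI[of "[x]"]) (use assms in auto)

lemma poly_fraction_over_mult:
  assumes "poly_fraction_over ok q X f" "poly_fraction_over ok q X g"
  shows "poly_fraction_over ok q X (\<lambda>d. f d * g d)"
proof -
  obtain P fs where f: "\<forall>x\<in>set fs. ok x" "\<forall>d\<in>X. poly (prod_list (map q fs)) d > 0"
    "\<forall>d\<in>X. f d = poly P d / poly (prod_list (map q fs)) d"
    using assms(1) by (rule poly_fraction_overE)
  obtain Q gs where g: "\<forall>x\<in>set gs. ok x" "\<forall>d\<in>X. poly (prod_list (map q gs)) d > 0"
    "\<forall>d\<in>X. g d = poly Q d / poly (prod_list (map q gs)) d"
    using assms(2) by (rule poly_fraction_overE)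
  show ?thesis
    by (rule poly_fraction_overI[of "fs @ gs" _ _ _ _ "P * Q"]) (use f g in auto)
qed

lemma poly_fraction_over_add:
  assumes "poly_fraction_over ok q X f" "poly_fraction_over ok q X g"
  shows "poly_fraction_over ok q X (\<lambda>d. f d + g d)"
proof -
  obtain P fs where f: "\<forall>x\<in>set fs. ok x" "\<forall>d\<in>X. poly (prod_list (map q fs)) d > 0"
    "\<forall>d\<in>X. f d = poly P d / poly (prod_list (map q fs)) d"
    using assms(1) by (rule poly_fraction_overE)
  obtain Q gs where g: "\<forall>x\<in>set gs. ok x" "\<forall>d\<in>X. poly (prod_list (map q gs)) d > 0"
    "\<forall>d\<in>X. g d = poly Q d / poly (prod_list (map q gs)) d"
    using assms(2) by (rule poly_fraction_overE)
  show ?thesis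
  proof (rule poly_fraction_overI[of "fs @ gs" _ _ _ _
        "P * prod_list (map q gs) + Q * prod_list (map q fs)"])
    show "\<forall>d\<in>X. f d + g d = poly (P * prod_list (map q gs) + Q * prod_list (map q fs)) d /
                             poly (prod_list (map q (fs @ gs))) d"
    proof
      fix d assume "d \<in> X"
      then have "poly (prod_list (map q fs)) d \<noteq> 0" "poly (prod_list (map q gs)) d \<noteq> 0"
        using f(2) g(2) by (metis less_irrefl)+
      then show "f d + g d = poly (P * prod_list (map q gs) + Q * prod_list (map q fs)) d /
                             poly (prod_list (map q (fs @ gs))) d"
        using f(3) g(3) \<open>d \<in> X\<close> by (simp add: add_frac_eq)
    qed
  qed (use f g in auto)
qed

lemma poly_fraction_over_uminus:
  assumes "poly_fraction_over ok q X f"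
  shows "poly_fraction_over ok q X (\<lambda>d. - f d)"
proof -
  obtain P fs where f: "\<forall>x\<in>set fs. ok x" "\<forall>d\<in>X. poly (prod_list (map q fs)) d > 0"
    "\<forall>d\<in>X. f d = poly P d / poly (prod_list (map q fs)) d"
    using assms by (rule poly_fraction_overE)
  show ?thesis
    by (rule poly_fraction_overI[of fs _ _ _ _ "- P"]) (use f in auto)
qed

lemma poly_fraction_over_diff:
  assumes "poly_fraction_over ok q X f" "poly_fraction_over ok q X g"
  shows "poly_fraction_over ok q X (\<lambda>d. f d - g d)"
  using poly_fraction_over_add[OF assms(1) poly_fraction_over_uminus[OF assms(2)]] by simp

lemma poly_fraction_over_sum:
  assumes "finite A" "\<And>y. y \<in> A \<Longrightarrow> poly_fraction_over ok q X (f y)"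
  shows "poly_fraction_over ok q X (\<lambda>d. \<Sum>y\<in>A. f y d)"
  using assms
proof (induction A rule: finite_induct)
  case empty
  show ?case by (rule poly_fraction_over_cong[OF poly_fraction_over_poly[of _ _ _ 0]]) simp
next
  case (insert y A)
  then show ?case by (simp add: poly_fraction_over_add)
qed

lemma poly_fraction_over_prod:
  assumes "finite A" "\<And>y. y \<in> A \<Longrightarrow> poly_fraction_over ok q X (f y)"
  shows "poly_fraction_over ok q X (\<lambda>d. \<Prod>y\<in>A. f y d)"
  using assms
proof (induction A rule: finite_induct)
  case empty
  show ?case by (rule poly_fraction_over_cong[OF poly_fraction_over_poly[of _ _ _ 1]]) simp
next
  case (insert y A)
  then show ?case by (simp add: poly_fraction_over_mult)
qed

lemma poly_fraction_over_reindex: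
  assumes "poly_fraction_over ok q X f" "\<And>x. q x = q' (h x)" "\<And>x. ok x \<Longrightarrow> ok' (h x)"
  shows "poly_fraction_over ok' q' X f"
proof -
  obtain P fs where f: "\<forall>x\<in>set fs. ok x" "\<forall>d\<in>X. poly (prod_list (map q fs)) d > 0"
    "\<forall>d\<in>X. f d = poly P d / poly (prod_list (map q fs)) d"
    using assms(1) by (rule poly_fraction_overE)
  moreover have "map q fs = map q' (map h fs)" by (simp add: assms(2))
  ultimately show ?thesis
    by (intro poly_fraction_overI[of "map h fs" _ _ _ _ P]) (use assms(3) in auto)
qed

lemma poly_fraction_over_pos_numerator:
  assumes "poly_fraction_over ok q X f" "x \<in> X" "f x > 0" "Y \<subseteq> X"
  shows "\<exists>P D fs. (\<forall>y\<in>set fs. ok y) \<and> D = prod_list (map q fs)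
           \<and> (\<forall>d\<in>Y. f d = poly P d / poly D d) \<and> poly P x > 0"
proof -
  obtain P fs where fs: "\<forall>y\<in>set fs. ok y" and D: "\<forall>d\<in>X. poly (prod_list (map q fs)) d > 0"
    and f: "\<forall>d\<in>X. f d = poly P d / poly (prod_list (map q fs)) d"
    using assms(1) by (rule poly_fraction_overE)
  have "poly P x > 0"
    using assms(2,3) D f by (metis zero_less_divide_iff order_less_asym)
  with fs f assms(4) show ?thesis by blast
qed

lemma poly_nonneg_if_pos_at_right:
  fixes p :: "real poly"
  assumes "c > 0" "\<forall>x\<in>{0<..c}. poly p x > 0"
  shows "poly p 0 \<ge> 0"
proof (rule tendsto_lowerbound)
  show "(poly p \<longlongrightarrow> poly p 0) (at_right 0)"
    by (intro tendsto_intros tendsto_ident_at)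
  have "eventually (\<lambda>x. x \<in> {0<..<c}) (at_right (0::real))"
    using assms(1) by (rule eventually_at_right_real)
  then show "eventually (\<lambda>x. 0 \<le> poly p x) (at_right 0)"
    by eventually_elim (use assms(2) in \<open>auto intro: less_imp_le\<close>)
qed simp

definition gap :: "nat set \<Rightarrow> (nat \<Rightarrow> nat \<Rightarrow> bool) \<Rightarrow> (nat \<Rightarrow> real) \<Rightarrow> nat set \<Rightarrow> real" where
  "gap V E alpha S = (\<Sum>i\<in>nbrs V E S. alpha i) - (\<Sum>i\<in>S. alpha i)"

lemma poly_gap_poly: "poly (gap_poly V E a b S) d = gap V E (\<lambda>i. a i + b i * d) S"
  by (simp add: gap_poly_def gap_def sum.distrib sum_distrib_left right_diff_distrib mult.commute)

lemma T_ord_eq_prod_gap: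
  "T_ord V E alpha xs = (\<Prod>k\<in>{1..length xs}. alpha (xs ! (k - 1)) / gap V E alpha (set (take k xs)))"
  by (simp add: T_ord_def gap_def)

lemma nbrs_mono: "(\<And>x y. G x y \<Longrightarrow> H x y) \<Longrightarrow> nbrs V G S \<subseteq> nbrs V H S"
  unfolding nbrs_def nbr_def by blast

lemma gap_mono:
  assumes "finite V" "\<forall>i\<in>V. alpha i \<ge> 0" "\<And>x y. G x y \<Longrightarrow> H x y"
  shows "gap V G alpha S \<le> gap V H alpha S"
proof -
  have "nbrs V H S \<subseteq> V" by (auto simp: nbrs_def nbr_def)
  then have "(\<Sum>i\<in>nbrs V G S. alpha i) \<le> (\<Sum>i\<in>nbrs V H S. alpha i)"
    using assms by (intro sum_mono2 nbrs_mono) (auto intro: finite_subset)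
  then show ?thesis by (simp add: gap_def)
qed

text \<open>At delta = 0 the gap is a limit of positive values, and it is non-zero because S is not
  saturated.\<close>

lemma gap_pos_unless_saturated:
  assumes "c > 0"
    and "\<forall>d\<in>{0<..c}. \<forall>I\<in>indep_sets V E. (\<Sum>i\<in>I. a i + b i * d) < (\<Sum>i\<in>nbrs V E I. a i + b i * d)"
    and "\<forall>I\<in>indep_sets V E. (\<Sum>i\<in>nbrs V E I. a i) - (\<Sum>i\<in>I. a i) = 0 \<longrightarrow> I = hatI"
    and "S \<in> indep_sets V E" "S \<noteq> hatI" "d \<in> {0..c}"
  shows "gap V E (\<lambda>i. a i + b i * d) S > 0"
proof -
  have pos: "\<forall>x\<in>{0<..c}. poly (gap_poly V E a b S) x > 0"
    using assms(2,4) by (simp add: poly_gap_poly gap_def)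
  have "poly (gap_poly V E a b S) 0 \<ge> 0"
    using assms(1) pos by (rule poly_nonneg_if_pos_at_right)
  moreover have "poly (gap_poly V E a b S) 0 \<noteq> 0"
    using assms(3-5) by (auto simp: poly_gap_poly gap_def)
  ultimately have "poly (gap_poly V E a b S) 0 > 0" by linarith
  then have "\<forall>x\<in>{0..c}. poly (gap_poly V E a b S) x > 0"
    using pos by (auto simp: order_le_less)
  with assms(6) show ?thesis by (simp add: poly_gap_poly)
qed

lemma indep_sets_mono: "(\<And>x y. G x y \<Longrightarrow> H x y) \<Longrightarrow> indep_sets V H \<subseteq> indep_sets V G"
  unfolding indep_sets_def by blast

lemma indep_sets_subset: "I \<in> indep_sets V G \<Longrightarrow> S \<subseteq> I \<Longrightarrow> S \<noteq> {} \<Longrightarrow> S \<in> indep_sets V G"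
  unfolding indep_sets_def by blast

lemma finite_indep_sets: "finite V \<Longrightarrow> finite (indep_sets V G)"
  by (rule finite_subset[of _ "Pow V"]) (auto simp: indep_sets_def)

lemma finite_indep_set: "finite V \<Longrightarrow> I \<in> indep_sets V G \<Longrightarrow> finite I"
  unfolding indep_sets_def by (blast intro: finite_subset)

lemma prefix_of_permutation:
  assumes "xs \<in> permutations_of_set I" "k \<in> {1..length xs}"
  shows "set (take k xs) \<subseteq> I" "set (take k xs) \<noteq> {}" "xs ! (k - 1) \<in> I"
  using assms by (auto simp: permutations_of_set_def dest: in_set_takeD)

lemma T_set_pos:
  assumes "finite I" "I \<noteq> {}" "\<forall>i\<in>I. alpha i > 0"
    and "\<And>S. S \<subseteq> I \<Longrightarrow> S \<noteq> {} \<Longrightarrow> gap V G alpha S > 0"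
  shows "T_set V G alpha I > 0"
proof -
  have "T_ord V G alpha xs > 0" if "xs \<in> permutations_of_set I" for xs
    unfolding T_ord_eq_prod_gap
    using prefix_of_permutation[OF that] assms(3,4) by (intro prod_pos) auto
  moreover obtain xs where "xs \<in> permutations_of_set I"
    using finite_distinct_list[OF assms(1)] by (auto simp: permutations_of_set_def)
  ultimately show ?thesis
    unfolding T_set_def using assms(1) by (intro sum_pos2) (auto intro: less_imp_le)
qed

lemma T_set_antimono:
  assumes "finite V" "\<forall>i\<in>V. alpha i \<ge> 0" "\<And>x y. G x y \<Longrightarrow> H x y" "I \<subseteq> V"
    and "\<And>S. S \<subseteq> I \<Longrightarrow> S \<noteq> {} \<Longrightarrow> gap V G alpha S > 0"
  shows "T_set V H alpha I \<le> T_set V G alpha I"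
  unfolding T_set_def
proof (rule sum_mono)
  fix xs assume xs: "xs \<in> permutations_of_set I"
  show "T_ord V H alpha xs \<le> T_ord V G alpha xs"
    unfolding T_ord_eq_prod_gap
  proof (rule prod_mono)
    fix k assume k: "k \<in> {1..length xs}"
    let ?S = "set (take k xs)"
    have "alpha (xs ! (k - 1)) \<ge> 0" "gap V G alpha ?S > 0"
      using prefix_of_permutation[OF xs k] assms(2,4,5) by auto
    moreover have "gap V G alpha ?S \<le> gap V H alpha ?S"
      using assms(1-3) by (rule gap_mono)
    ultimately show "0 \<le> alpha (xs ! (k - 1)) / gap V H alpha ?S \<and>
        alpha (xs ! (k - 1)) / gap V H alpha ?S \<le> alpha (xs ! (k - 1)) / gap V G alpha ?S"
      by (auto intro: divide_left_mono)
  qed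
qed

lemma T_ord_poly_fraction:
  assumes "\<And>k. k \<in> {1..length xs} \<Longrightarrow> ok (set (take k xs))"
    and "\<And>k d. k \<in> {1..length xs} \<Longrightarrow> d \<in> X \<Longrightarrow> gap V G (\<lambda>i. a i + b i * d) (set (take k xs)) > 0"
  shows "poly_fraction_over ok (gap_poly V G a b) X (\<lambda>d. T_ord V G (\<lambda>i. a i + b i * d) xs)"
proof (rule poly_fraction_over_cong)
  let ?x = "\<lambda>k. xs ! (k - 1)"
  show "poly_fraction_over ok (gap_poly V G a b) X (\<lambda>d. \<Prod>k\<in>{1..length xs}.
      poly [:a (?x k), b (?x k):] d / poly (gap_poly V G a b (set (take k xs))) d)"
  proof (rule poly_fraction_over_prod)
    fix k assume k: "k \<in> {1..length xs}"
    show "poly_fraction_over ok (gap_poly V G a b) X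
        (\<lambda>d. poly [:a (?x k), b (?x k):] d / poly (gap_poly V G a b (set (take k xs))) d)"
      using assms(1)[OF k] assms(2)[OF k] by (intro poly_fraction_over_factor) (simp_all add: poly_gap_poly)
  qed simp
  show "(\<Prod>k\<in>{1..length xs}. poly [:a (?x k), b (?x k):] d / poly (gap_poly V G a b (set (take k xs))) d)
      = T_ord V G (\<lambda>i. a i + b i * d) xs" for d
    by (simp add: T_ord_eq_prod_gap poly_gap_poly mult.commute)
qed

lemma sum_T_set_poly_fraction:
  assumes "finite Is" "\<And>I. I \<in> Is \<Longrightarrow> finite I"
    and "\<And>I S. I \<in> Is \<Longrightarrow> S \<subseteq> I \<Longrightarrow> S \<noteq> {} \<Longrightarrow> ok S"
    and "\<And>I S d. I \<in> Is \<Longrightarrow> S \<subseteq> I \<Longrightarrow> S \<noteq> {} \<Longrightarrow> d \<in> X \<Longrightarrow> gap V G (\<lambda>i. a i + b i * d) S > 0"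
  shows "poly_fraction_over ok (gap_poly V G a b) X (\<lambda>d. \<Sum>I\<in>Is. T_set V G (\<lambda>i. a i + b i * d) I)"
  unfolding T_set_def
proof (rule poly_fraction_over_sum[OF assms(1)], rule poly_fraction_over_sum)
  fix I xs assume I: "I \<in> Is"
  show "finite (permutations_of_set I)" by simp
  assume xs: "xs \<in> permutations_of_set I"
  show "poly_fraction_over ok (gap_poly V G a b) X (\<lambda>d. T_ord V G (\<lambda>i. a i + b i * d) xs)"
  proof (rule T_ord_poly_fraction)
    fix k d assume k: "k \<in> {1..length xs}"
    show "ok (set (take k xs))" using prefix_of_permutation(1,2)[OF xs k] by (rule assms(3)[OF I])
    assume "d \<in> X"
    with prefix_of_permutation(1,2)[OF xs k] show "gap V G (\<lambda>i. a i + b i * d) (set (take k xs)) > 0"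
      by (rule assms(4)[OF I])
  qed
qed

lemma sum_T_set_diff_poly_fraction:
  assumes "finite V" "\<forall>d\<in>X. \<forall>i\<in>V. a i + b i * d \<ge> 0" "\<And>x y. G x y \<Longrightarrow> H x y"
    and "Js \<subseteq> Is" "Is \<subseteq> indep_sets V G" "Js \<subseteq> indep_sets V H"
    and "\<And>I S d. I \<in> Is \<Longrightarrow> S \<subseteq> I \<Longrightarrow> S \<noteq> {} \<Longrightarrow> d \<in> X \<Longrightarrow> gap V G (\<lambda>i. a i + b i * d) S > 0"
  shows "poly_fraction_over (\<lambda>(I, g). if g then I \<in> indep_sets V H else I \<in> indep_sets V G)
      (\<lambda>(I, g). gap_poly V (if g then H else G) a b I) X
      (\<lambda>d. (\<Sum>I\<in>Is. T_set V G (\<lambda>i. a i + b i * d) I) - (\<Sum>I\<in>Js. T_set V H (\<lambda>i. a i + b i * d) I))"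
proof (rule poly_fraction_over_diff)
  have finIs: "finite Is" using assms(5) finite_indep_sets[OF assms(1)] by (rule finite_subset)
  have finI: "finite I" if "I \<in> Is" for I
    using assms(1) subsetD[OF assms(5) that] by (rule finite_indep_set)
  show "poly_fraction_over (\<lambda>(I, g). if g then I \<in> indep_sets V H else I \<in> indep_sets V G)
      (\<lambda>(I, g). gap_poly V (if g then H else G) a b I) X (\<lambda>d. \<Sum>I\<in>Is. T_set V G (\<lambda>i. a i + b i * d) I)"
  proof (rule poly_fraction_over_reindex[where h = "\<lambda>S. (S, False)"])
    show "poly_fraction_over (\<lambda>S. S \<in> indep_sets V G) (gap_poly V G a b) X
        (\<lambda>d. \<Sum>I\<in>Is. T_set V G (\<lambda>i. a i + b i * d) I)"
    proof (rule sum_T_set_poly_fraction)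
      show "S \<in> indep_sets V G" if "I \<in> Is" "S \<subseteq> I" "S \<noteq> {}" for I S
        using that assms(5) indep_sets_subset by blast
    qed (use finIs finI assms(7) in blast)+
  qed simp_all
  show "poly_fraction_over (\<lambda>(I, g). if g then I \<in> indep_sets V H else I \<in> indep_sets V G)
      (\<lambda>(I, g). gap_poly V (if g then H else G) a b I) X (\<lambda>d. \<Sum>I\<in>Js. T_set V H (\<lambda>i. a i + b i * d) I)"
  proof (rule poly_fraction_over_reindex[where h = "\<lambda>S. (S, True)"])
    show "poly_fraction_over (\<lambda>S. S \<in> indep_sets V H) (gap_poly V H a b) X
        (\<lambda>d. \<Sum>I\<in>Js. T_set V H (\<lambda>i. a i + b i * d) I)"
    proof (rule sum_T_set_poly_fraction)
      fix I S d assume I: "I \<in> Js" and S: "S \<subseteq> I" "S \<noteq> {}"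
      show "S \<in> indep_sets V H" using I S assms(6) indep_sets_subset by blast
      assume d: "d \<in> X"
      have "gap V G (\<lambda>i. a i + b i * d) S > 0" using I S d assms(4,7) by blast
      also have "gap V G (\<lambda>i. a i + b i * d) S \<le> gap V H (\<lambda>i. a i + b i * d) S"
        using assms(1) bspec[OF assms(2) d] assms(3) by (rule gap_mono)
      finally show "gap V H (\<lambda>i. a i + b i * d) S > 0" .
    next
      show "finite Js" using assms(4) finIs by (rule finite_subset)
      show "finite I" if "I \<in> Js" for I using that assms(4) finI by blast
    qed
  qed simp_all
qed

text \<open>Adding edges enlarges every gap and so shrinks every surviving term, while the term of J is
  lost altogether.\<close>

lemma sum_T_set_diff_pos:
  assumes "finite V" "\<forall>i\<in>V. alpha i > 0" "\<And>x y. G x y \<Longrightarrow> H x y"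
    and "Js \<subseteq> Is" "Is \<subseteq> indep_sets V G" "J \<in> Is - Js"
    and "\<And>I S. I \<in> Is \<Longrightarrow> S \<subseteq> I \<Longrightarrow> S \<noteq> {} \<Longrightarrow> gap V G alpha S > 0"
  shows "(\<Sum>I\<in>Is. T_set V G alpha I) - (\<Sum>I\<in>Js. T_set V H alpha I) > 0"
proof -
  have finIs: "finite Is" using assms(1,5) finite_indep_sets finite_subset by blast
  have members: "I \<subseteq> V" "I \<noteq> {}" if "I \<in> Is" for I
    using that assms(5) by (auto simp: indep_sets_def)
  have pos: "T_set V G alpha I > 0" if I: "I \<in> Is" for I
  proof (rule T_set_pos)
    show "finite I" using members(1)[OF I] assms(1) by (rule finite_subset)
    show "I \<noteq> {}" "\<forall>i\<in>I. alpha i > 0" using members[OF I] assms(2) by auto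
  qed (rule assms(7)[OF I])
  have "(\<Sum>I\<in>Js. T_set V H alpha I) \<le> (\<Sum>I\<in>Js. T_set V G alpha I)"
  proof (rule sum_mono)
    fix I assume "I \<in> Js"
    then have I: "I \<in> Is" using assms(4) by blast
    have "\<forall>i\<in>V. alpha i \<ge> 0" using assms(2) by (simp add: less_imp_le)
    with assms(1) show "T_set V H alpha I \<le> T_set V G alpha I"
      using assms(3) members(1)[OF I] assms(7)[OF I] by (rule T_set_antimono)
  qed
  also have "\<dots> < (\<Sum>I\<in>Js. T_set V G alpha I) + (\<Sum>I\<in>Is - Js. T_set V G alpha I)"
  proof -
    have "(\<Sum>I\<in>Is - Js. T_set V G alpha I) > 0"
      using finIs assms(6) pos by (intro sum_pos2[of _ J]) (auto intro: less_imp_le)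
    then show ?thesis by simp
  qed
  also have "\<dots> = (\<Sum>I\<in>Is. T_set V G alpha I)"
    using sum.subset_diff[OF assms(4) finIs, of "T_set V G alpha"] by linarith
  finally show ?thesis by simp
qed

theorem mainTheorem7:
  fixes n :: nat and E :: "nat \<Rightarrow> nat \<Rightarrow> bool" and istar jstar :: nat
    and a b :: "nat \<Rightarrow> real" and dbar :: real and hatI :: "nat set"
  defines "V \<equiv> {1..n}"
  defines "alpha \<equiv> (\<lambda>(d::real) i. a i + b i * d)"
  defines "Ebar \<equiv> add_edge E istar jstar"
  defines "Istar \<equiv> {I \<in> indep_sets V E. istar \<in> I \<or> jstar \<in> I}"
  defines "IbarStar \<equiv> {I \<in> indep_sets V Ebar. istar \<in> I \<or> jstar \<in> I}"
  assumes graph: "simple_graph V E" and conn: "graph_connected V E"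
    and ij: "istar \<in> V" "jstar \<in> V" "istar \<noteq> jstar" "\<not> E istar jstar"
    and a_pos: "\<forall>i\<in>V. a i > 0"
    and dbar_pos: "dbar > 0"
    and prob: "\<forall>d\<in>{0<..dbar}. (\<forall>i\<in>V. alpha d i \<ge> 0) \<and> (\<Sum>i\<in>V. alpha d i) = 1"
    and stable: "\<forall>d\<in>{0<..dbar}. \<forall>I\<in>indep_sets V E.
                    (\<Sum>i\<in>I. alpha d i) < (\<Sum>i\<in>nbrs V E I. alpha d i)"
    and hat_indep: "hatI \<in> indep_sets V E"
    and hat_sat: "(\<Sum>i\<in>nbrs V E hatI. a i) - (\<Sum>i\<in>hatI. a i) = 0"
    and hat_unique: "\<forall>I\<in>indep_sets V E.
                       (\<Sum>i\<in>nbrs V E I. a i) - (\<Sum>i\<in>I. a i) = 0 \<longrightarrow> I = hatI"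
    and not_sub: "\<forall>I\<in>Istar. \<not> hatI \<subseteq> I"
  shows "\<exists>P D :: real poly. \<exists>fs :: (nat set \<times> bool) list.
           (\<forall>(I, g)\<in>set fs. if g then I \<in> indep_sets V Ebar else I \<in> indep_sets V E)
         \<and> D = prod_list (map (\<lambda>(I, g). gap_poly V (if g then Ebar else E) a b I) fs)
         \<and> (\<forall>d\<in>{0<..dbar}.
              (\<Sum>I\<in>Istar. T_set V E (alpha d) I) - (\<Sum>I\<in>IbarStar. T_set V Ebar (alpha d) I)
              = poly P d / poly D d)
         \<and> poly P 0 > 0"
proof -
  let ?X = "{0..dbar}"
  have finV: "finite V" using graph by (simp add: simple_graph_def)
  have E_Ebar: "\<And>x y. E x y \<Longrightarrow> Ebar x y" by (simp add: Ebar_def add_edge_def)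
  have families: "IbarStar \<subseteq> Istar" "Istar \<subseteq> indep_sets V E" "IbarStar \<subseteq> indep_sets V Ebar"
    using indep_sets_mono[of E Ebar V] E_Ebar by (auto simp: Istar_def IbarStar_def)
  have alpha_nonneg: "\<forall>d\<in>?X. \<forall>i\<in>V. a i + b i * d \<ge> 0"
    using prob a_pos by (auto simp: alpha_def less_imp_le order_le_less)
  have gap_pos: "gap V E (\<lambda>i. a i + b i * d) S > 0"
    if "I \<in> Istar" "S \<subseteq> I" "S \<noteq> {}" "d \<in> ?X" for I S d
  proof (rule gap_pos_unless_saturated[OF dbar_pos _ hat_unique _ _ \<open>d \<in> ?X\<close>])
    show "\<forall>d\<in>{0<..dbar}. \<forall>I\<in>indep_sets V E. (\<Sum>i\<in>I. a i + b i * d) < (\<Sum>i\<in>nbrs V E I. a i + b i * d)"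
      using stable by (simp add: alpha_def)
    have "I \<in> indep_sets V E" "\<not> hatI \<subseteq> I" using that(1) not_sub by (auto simp: Istar_def)
    then show "S \<in> indep_sets V E" "S \<noteq> hatI" using that(2,3) indep_sets_subset by blast+
  qed
  have "poly_fraction_over (\<lambda>(I, g). if g then I \<in> indep_sets V Ebar else I \<in> indep_sets V E)
      (\<lambda>(I, g). gap_poly V (if g then Ebar else E) a b I) ?X
      (\<lambda>d. (\<Sum>I\<in>Istar. T_set V E (alpha d) I) - (\<Sum>I\<in>IbarStar. T_set V Ebar (alpha d) I))"
    unfolding alpha_def using finV alpha_nonneg E_Ebar families gap_pos
    by (rule sum_T_set_diff_poly_fraction)
  moreover have "0 \<in> ?X" using dbar_pos by simp
  moreover have "(\<Sum>I\<in>Istar. T_set V E (alpha 0) I) - (\<Sum>I\<in>IbarStar. T_set V Ebar (alpha 0) I) > 0"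
  proof (rule sum_T_set_diff_pos[OF finV _ E_Ebar families(1,2)])
    show "\<forall>i\<in>V. alpha 0 i > 0" using a_pos by (simp add: alpha_def)
    show "{istar, jstar} \<in> Istar - IbarStar"
      using ij graph by (auto simp: Istar_def IbarStar_def indep_sets_def Ebar_def add_edge_def simple_graph_def)
    show "gap V E (alpha 0) S > 0" if "I \<in> Istar" "S \<subseteq> I" "S \<noteq> {}" for I S
      using gap_pos[OF that \<open>0 \<in> ?X\<close>] by (simp add: alpha_def)
  qed
  moreover have "{0<..dbar} \<subseteq> ?X" by auto
  ultimately show ?thesis by (rule poly_fraction_over_pos_numerator)
qed

end
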